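(* Let $(G,\prec)$ be a POP-graph and let $v$ be an internal vertex of $G$ that is maximal, i.e. there is no internal vertex $v'\neq v$ with $v\to v'$. Then (1) $O(v)\subseteq O(G)$ and $O(v)$ is an interval of $(E(G),\prec)$; in particular $O(v)$ is an interval of $(O(G),\prec)$. (2) For every $h\in I(v)$ and $o\in O(G)\setminus O(v)$: $o\prec h$ iff $o\prec\min O(v)$, and $h\prec o$ iff $\max O(v)\prec o$.
   Context: A progressive graph is a finite directed acyclic graph (parallel edges allowed) in which every source and every sink has degree one; degree-one vertices are boundary vertices, the others internal. $O(G)$ is the set of output edges (edges whose terminal vertex is a boundary vertex). For a vertex $v$, $I(v)$ and $O(v)$ are its incoming and outgoing edges. For edges write $e\to e'$ if $e\neq e'$ and there is a directed path whose first edge is $e$ and last edge is $e'$; for vertices $v\to v'$ means there is a directed path from $v$ to $v'$. A planar order on $G$ is a linear order $\prec$ on $E(G)$ such that (P1) $e_1\to e_2$ implies $e_1\prec e_2$; (P2) if $e_1\prec e_2\prec e_3$ and $e_1\to e_3$ then $e_1\to e_2$ or $e_2\to e_3$. A POP-graph is a progressive graph with a planar order. An interval of a linearly ordered set $(S,\prec)$ is a subset of the form $\{s: a\preceq s\preceq b\}$. *)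

theory Defs
  imports Main
begin

definition in_edges :: "'e set \<Rightarrow> ('e \<Rightarrow> 'v) \<Rightarrow> 'v \<Rightarrow> 'e set" where
  "in_edges E tgt v = {e \<in> E. tgt e = v}"

definition out_edges :: "'e set \<Rightarrow> ('e \<Rightarrow> 'v) \<Rightarrow> 'v \<Rightarrow> 'e set" where
  "out_edges E src v = {e \<in> E. src e = v}"

definition degree :: "'e set \<Rightarrow> ('e \<Rightarrow> 'v) \<Rightarrow> ('e \<Rightarrow> 'v) \<Rightarrow> 'v \<Rightarrow> nat" where
  "degree E src tgt v = card (in_edges E tgt v) + card (out_edges E src v)"

definition vertex_rel :: "'e set \<Rightarrow> ('e \<Rightarrow> 'v) \<Rightarrow> ('e \<Rightarrow> 'v) \<Rightarrow> ('v \<times> 'v) set" where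
  "vertex_rel E src tgt = {(src e, tgt e) | e. e \<in> E}"

definition progressive_graph ::
  "'v set \<Rightarrow> 'e set \<Rightarrow> ('e \<Rightarrow> 'v) \<Rightarrow> ('e \<Rightarrow> 'v) \<Rightarrow> bool" where
  "progressive_graph V E src tgt \<longleftrightarrow>
     finite V \<and> finite E \<and> (\<forall>e\<in>E. src e \<in> V \<and> tgt e \<in> V) \<and>
     acyclic (vertex_rel E src tgt) \<and>
     (\<forall>v\<in>V. in_edges E tgt v = {} \<longrightarrow> degree E src tgt v = 1) \<and>
     (\<forall>v\<in>V. out_edges E src v = {} \<longrightarrow> degree E src tgt v = 1)"

definition boundary_vertex :: "'v set \<Rightarrow> 'e set \<Rightarrow> ('e \<Rightarrow> 'v) \<Rightarrow> ('e \<Rightarrow> 'v) \<Rightarrow> 'v \<Rightarrow> bool" where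
  "boundary_vertex V E src tgt v \<longleftrightarrow> v \<in> V \<and> degree E src tgt v = 1"

definition internal_vertex :: "'v set \<Rightarrow> 'e set \<Rightarrow> ('e \<Rightarrow> 'v) \<Rightarrow> ('e \<Rightarrow> 'v) \<Rightarrow> 'v \<Rightarrow> bool" where
  "internal_vertex V E src tgt v \<longleftrightarrow> v \<in> V \<and> degree E src tgt v \<noteq> 1"

definition output_edges :: "'v set \<Rightarrow> 'e set \<Rightarrow> ('e \<Rightarrow> 'v) \<Rightarrow> ('e \<Rightarrow> 'v) \<Rightarrow> 'e set" where
  "output_edges V E src tgt = {e \<in> E. boundary_vertex V E src tgt (tgt e)}"

definition edge_reach :: "'e set \<Rightarrow> ('e \<Rightarrow> 'v) \<Rightarrow> ('e \<Rightarrow> 'v) \<Rightarrow> 'e \<Rightarrow> 'e \<Rightarrow> bool" where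
  "edge_reach E src tgt e e' \<longleftrightarrow>
     e \<noteq> e' \<and> (e, e') \<in> {(a, b). a \<in> E \<and> b \<in> E \<and> tgt a = src b}\<^sup>+"

definition vertex_reach :: "'e set \<Rightarrow> ('e \<Rightarrow> 'v) \<Rightarrow> ('e \<Rightarrow> 'v) \<Rightarrow> 'v \<Rightarrow> 'v \<Rightarrow> bool" where
  "vertex_reach E src tgt v v' \<longleftrightarrow> (v, v') \<in> (vertex_rel E src tgt)\<^sup>*"

text \<open>A planar order: a strict linear order prec on E satisfying (P1) and (P2).\<close>
definition planar_order :: "'e set \<Rightarrow> ('e \<Rightarrow> 'v) \<Rightarrow> ('e \<Rightarrow> 'v) \<Rightarrow> ('e \<Rightarrow> 'e \<Rightarrow> bool) \<Rightarrow> bool" where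
  "planar_order E src tgt prec \<longleftrightarrow>
     (\<forall>a b. prec a b \<longrightarrow> a \<in> E \<and> b \<in> E) \<and>
     (\<forall>a\<in>E. \<not> prec a a) \<and>
     (\<forall>a\<in>E. \<forall>b\<in>E. \<forall>c\<in>E. prec a b \<longrightarrow> prec b c \<longrightarrow> prec a c) \<and>
     (\<forall>a\<in>E. \<forall>b\<in>E. a \<noteq> b \<longrightarrow> prec a b \<or> prec b a) \<and>
     (\<forall>e1\<in>E. \<forall>e2\<in>E. edge_reach E src tgt e1 e2 \<longrightarrow> prec e1 e2) \<and>
     (\<forall>e1\<in>E. \<forall>e2\<in>E. \<forall>e3\<in>E. prec e1 e2 \<longrightarrow> prec e2 e3 \<longrightarrow> edge_reach E src tgt e1 e3 \<longrightarrow>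
        edge_reach E src tgt e1 e2 \<or> edge_reach E src tgt e2 e3)"

definition POP_graph ::
  "'v set \<Rightarrow> 'e set \<Rightarrow> ('e \<Rightarrow> 'v) \<Rightarrow> ('e \<Rightarrow> 'v) \<Rightarrow> ('e \<Rightarrow> 'e \<Rightarrow> bool) \<Rightarrow> bool" where
  "POP_graph V E src tgt prec \<longleftrightarrow> progressive_graph V E src tgt \<and> planar_order E src tgt prec"

definition is_interval :: "('e \<Rightarrow> 'e \<Rightarrow> bool) \<Rightarrow> 'e set \<Rightarrow> 'e set \<Rightarrow> bool" where
  "is_interval prec S X \<longleftrightarrow>
     (\<exists>a\<in>S. \<exists>b\<in>S. X = {s \<in> S. (a = s \<or> prec a s) \<and> (s = b \<or> prec s b)})"

definition ord_min :: "('e \<Rightarrow> 'e \<Rightarrow> bool) \<Rightarrow> 'e set \<Rightarrow> 'e" where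
  "ord_min prec S = (THE m. m \<in> S \<and> (\<forall>s\<in>S. s \<noteq> m \<longrightarrow> prec m s))"

definition ord_max :: "('e \<Rightarrow> 'e \<Rightarrow> bool) \<Rightarrow> 'e set \<Rightarrow> 'e" where
  "ord_max prec S = (THE m. m \<in> S \<and> (\<forall>s\<in>S. s \<noteq> m \<longrightarrow> prec s m))"

end

theory Submission
  imports Defs
begin

text \<open>Paths out of an in-edge h of v must start with an out-edge of v; when v is maximal
  these out-edges end at boundary vertices, so they are exactly the edges reachable from h.
  By (P1) every in-edge precedes all of O(v). An edge strictly between min O(v) and max O(v)
  but outside O(v) would, by (P2) applied to h \<prec> s \<prec> max O(v), either be reachable from h
  or reach max O(v) and hence min O(v), contradicting (P1). Part (2) is the same (P2)
  argument, using that output edges reach nothing.\<close>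

definition strict_linorder_on :: "'a set \<Rightarrow> ('a \<Rightarrow> 'a \<Rightarrow> bool) \<Rightarrow> bool" where
  "strict_linorder_on S p \<longleftrightarrow>
     (\<forall>a\<in>S. \<not> p a a) \<and>
     (\<forall>a\<in>S. \<forall>b\<in>S. \<forall>c\<in>S. p a b \<longrightarrow> p b c \<longrightarrow> p a c) \<and>
     (\<forall>a\<in>S. \<forall>b\<in>S. a \<noteq> b \<longrightarrow> p a b \<or> p b a)"

lemma strict_linorder_on_subset:
  "strict_linorder_on S p \<Longrightarrow> T \<subseteq> S \<Longrightarrow> strict_linorder_on T p"
  unfolding strict_linorder_on_def by (meson subsetD)

lemma strict_linorder_on_converse:
  "strict_linorder_on S p \<Longrightarrow> strict_linorder_on S (\<lambda>a b. p b a)"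
  unfolding strict_linorder_on_def by meson

lemma strict_linorder_on_ex_least:
  assumes "finite S" "S \<noteq> {}" "strict_linorder_on S p"
  shows "\<exists>m\<in>S. \<forall>s\<in>S. s \<noteq> m \<longrightarrow> p m s"
  using assms
proof (induction S rule: finite_ne_induct)
  case (singleton x)
  then show ?case by simp
next
  case (insert x F)
  then have lin: "strict_linorder_on (insert x F) p" by simp
  then obtain m where m: "m \<in> F" "\<forall>s\<in>F. s \<noteq> m \<longrightarrow> p m s"
    using insert.IH strict_linorder_on_subset by blast
  show ?case
  proof (cases "p x m")
    case True
    then have "\<forall>s\<in>F. p x s"
      using m lin unfolding strict_linorder_on_def by (metis insert_iff)
    then show ?thesis by auto
  next
    case False
    moreover have "m \<noteq> x" using m(1) insert.hyps by blast
    ultimately have "p m x"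
      using lin m(1) unfolding strict_linorder_on_def by blast
    then show ?thesis using m by auto
  qed
qed

lemma
  assumes "finite S" "S \<noteq> {}" "strict_linorder_on S p"
  shows ord_min_in: "ord_min p S \<in> S"
    and ord_min_least: "s \<in> S \<Longrightarrow> s \<noteq> ord_min p S \<Longrightarrow> p (ord_min p S) s"
proof -
  obtain m where m: "m \<in> S" "\<forall>s\<in>S. s \<noteq> m \<longrightarrow> p m s"
    using strict_linorder_on_ex_least[OF assms] by blast
  have unique: "m' = m" if "m' \<in> S" "\<forall>s\<in>S. s \<noteq> m' \<longrightarrow> p m' s" for m'
  proof (rule ccontr)
    assume "m' \<noteq> m"
    then have "p m m'" "p m' m" using m that by auto
    then show False using assms(3) m(1) that(1) unfolding strict_linorder_on_def by blast
  qed
  have "ord_min p S = m"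
    unfolding ord_min_def using m unique by (intro the_equality) blast+
  with m show "ord_min p S \<in> S" "s \<in> S \<Longrightarrow> s \<noteq> ord_min p S \<Longrightarrow> p (ord_min p S) s"
    by auto
qed

lemma ord_max_eq_ord_min_converse: "ord_max p S = ord_min (\<lambda>a b. p b a) S"
  by (simp add: ord_max_def ord_min_def)

lemma
  assumes "finite S" "S \<noteq> {}" "strict_linorder_on S p"
  shows ord_max_in: "ord_max p S \<in> S"
    and ord_max_greatest: "s \<in> S \<Longrightarrow> s \<noteq> ord_max p S \<Longrightarrow> p s (ord_max p S)"
  using ord_min_in ord_min_least assms strict_linorder_on_converse
  unfolding ord_max_eq_ord_min_converse by metis+

definition edge_step :: "'e set \<Rightarrow> ('e \<Rightarrow> 'v) \<Rightarrow> ('e \<Rightarrow> 'v) \<Rightarrow> ('e \<times> 'e) set" where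
  "edge_step E src tgt = {(a, b). a \<in> E \<and> b \<in> E \<and> tgt a = src b}"

lemma edge_reach_iff:
  "edge_reach E src tgt a b \<longleftrightarrow> a \<noteq> b \<and> (a, b) \<in> (edge_step E src tgt)\<^sup>+"
  unfolding edge_reach_def edge_step_def ..

lemma edge_reach_in_edges:
  "edge_reach E src tgt a b \<Longrightarrow> a \<in> E \<and> b \<in> E"
  unfolding edge_reach_iff edge_step_def by (auto dest: tranclD tranclD2)

lemma edge_reach_in_out:
  "h \<in> in_edges E tgt v \<Longrightarrow> e \<in> out_edges E src v \<Longrightarrow> h \<noteq> e \<Longrightarrow> edge_reach E src tgt h e"
  unfolding edge_reach_iff edge_step_def in_edges_def out_edges_def by auto

lemma edge_reach_redirect_out:
  assumes "edge_reach E src tgt s b" "b \<in> out_edges E src v" "e \<in> out_edges E src v" "s \<noteq> e"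
  shows "edge_reach E src tgt s e"
proof -
  have "(s, b) \<in> (edge_step E src tgt)\<^sup>+" using assms(1) edge_reach_iff by metis
  then have "(s, e) \<in> (edge_step E src tgt)\<^sup>+"
  proof (cases rule: tranclE)
    case base
    then show ?thesis using assms(2,3) unfolding edge_step_def out_edges_def by auto
  next
    case (step c)
    then have "(c, e) \<in> edge_step E src tgt"
      using assms(2,3) unfolding edge_step_def out_edges_def by auto
    with step(1) show ?thesis by simp
  qed
  with assms(4) show ?thesis by (simp add: edge_reach_iff)
qed

lemma edge_reach_from_in_edge:
  assumes "h \<in> in_edges E tgt v" "edge_reach E src tgt h s"
  obtains "s \<in> out_edges E src v" | e where "e \<in> out_edges E src v" "edge_reach E src tgt e s"
proof -
  have "(h, s) \<in> (edge_step E src tgt)\<^sup>+" using assms(2) edge_reach_iff by metis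
  then consider "(h, s) \<in> edge_step E src tgt"
    | e where "(h, e) \<in> edge_step E src tgt" "(e, s) \<in> (edge_step E src tgt)\<^sup>+"
    by (meson converse_tranclE)
  then show ?thesis
  proof cases
    case 1
    then show ?thesis
      using assms(1) by (intro that(1)) (auto simp: edge_step_def in_edges_def out_edges_def)
  next
    case (2 e)
    then have "e \<in> out_edges E src v"
      using assms(1) unfolding edge_step_def in_edges_def out_edges_def by auto
    then show ?thesis using 2 that by (metis edge_reach_iff)
  qed
qed

lemma output_edge_not_edge_reach:
  assumes "progressive_graph V E src tgt" "e \<in> output_edges V E src tgt"
  shows "\<not> edge_reach E src tgt e x"
proof
  assume "edge_reach E src tgt e x"
  then obtain y where "(e, y) \<in> edge_step E src tgt"
    unfolding edge_reach_iff by (meson tranclD)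
  then have y: "y \<in> out_edges E src (tgt e)"
    unfolding edge_step_def out_edges_def by auto
  have fin: "finite E" using assms(1) unfolding progressive_graph_def by blast
  have "e \<in> in_edges E tgt (tgt e)" and deg: "degree E src tgt (tgt e) = 1"
    using assms(2) unfolding output_edges_def in_edges_def boundary_vertex_def by auto
  moreover have "finite (in_edges E tgt (tgt e))" "finite (out_edges E src (tgt e))"
    using fin unfolding in_edges_def out_edges_def by auto
  ultimately have "card (in_edges E tgt (tgt e)) \<ge> 1" "card (out_edges E src (tgt e)) \<ge> 1"
    using y by (auto simp: Suc_le_eq card_gt_0_iff)
  with deg show False unfolding degree_def by linarith
qed

lemma in_edge_not_output_edge:
  "internal_vertex V E src tgt v \<Longrightarrow> h \<in> in_edges E tgt v \<Longrightarrow> h \<notin> output_edges V E src tgt"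
  unfolding internal_vertex_def in_edges_def output_edges_def boundary_vertex_def by auto

lemma internal_vertex_edges_nonempty:
  assumes "progressive_graph V E src tgt" "internal_vertex V E src tgt v"
  shows "in_edges E tgt v \<noteq> {}" "out_edges E src v \<noteq> {}"
  using assms unfolding progressive_graph_def internal_vertex_def by auto

lemma out_edges_subset_output_edges:
  assumes "progressive_graph V E src tgt"
    and maximal: "\<not> (\<exists>v'. internal_vertex V E src tgt v' \<and> v' \<noteq> v \<and> vertex_reach E src tgt v v')"
  shows "out_edges E src v \<subseteq> output_edges V E src tgt"
proof
  fix e assume e: "e \<in> out_edges E src v"
  then have step: "(v, tgt e) \<in> vertex_rel E src tgt" and eE: "e \<in> E"
    unfolding vertex_rel_def out_edges_def by auto
  have "tgt e \<noteq> v"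
    using step assms(1) unfolding progressive_graph_def acyclic_def by auto
  moreover have "vertex_reach E src tgt v (tgt e)"
    using step unfolding vertex_reach_def by auto
  moreover have "tgt e \<in> V" using assms(1) eE unfolding progressive_graph_def by blast
  ultimately have "boundary_vertex V E src tgt (tgt e)"
    using maximal unfolding internal_vertex_def boundary_vertex_def by auto
  with eE show "e \<in> output_edges V E src tgt" unfolding output_edges_def by simp
qed

locale maximal_internal_vertex =
  fixes V :: "'v set" and E :: "'e set" and src tgt :: "'e \<Rightarrow> 'v"
    and prec :: "'e \<Rightarrow> 'e \<Rightarrow> bool" and v :: 'v
  assumes pop: "POP_graph V E src tgt prec"
    and internal: "internal_vertex V E src tgt v"
    and maximal: "\<not> (\<exists>v'. internal_vertex V E src tgt v' \<and> v' \<noteq> v \<and> vertex_reach E src tgt v v')"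
begin

abbreviation "reach \<equiv> edge_reach E src tgt"
abbreviation "Iv \<equiv> in_edges E tgt v"
abbreviation "Ov \<equiv> out_edges E src v"
abbreviation "OG \<equiv> output_edges V E src tgt"
abbreviation "first_out \<equiv> ord_min prec Ov"
abbreviation "last_out \<equiv> ord_max prec Ov"

lemma progressive: "progressive_graph V E src tgt"
  using pop unfolding POP_graph_def by blast

lemma prec_in_edges: "prec a b \<Longrightarrow> a \<in> E \<and> b \<in> E"
  using pop unfolding POP_graph_def planar_order_def by blast

lemma linorder: "strict_linorder_on E prec"
  using pop unfolding POP_graph_def planar_order_def strict_linorder_on_def by blast

lemma prec_trans: "prec a b \<Longrightarrow> prec b c \<Longrightarrow> prec a c"
  using linorder prec_in_edges[of a b] prec_in_edges[of b c]
  unfolding strict_linorder_on_def by blast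

lemma prec_asym: "prec a b \<Longrightarrow> \<not> prec b a"
  using linorder prec_in_edges[of a b] prec_trans[of a b a]
  unfolding strict_linorder_on_def by blast

lemma prec_total: "a \<in> E \<Longrightarrow> b \<in> E \<Longrightarrow> a \<noteq> b \<Longrightarrow> prec a b \<or> prec b a"
  using linorder unfolding strict_linorder_on_def by blast

lemma prec_if_reach: "reach a b \<Longrightarrow> prec a b"
  using pop edge_reach_in_edges[of E src tgt a b]
  unfolding POP_graph_def planar_order_def by blast

lemma planar: "prec a b \<Longrightarrow> prec b c \<Longrightarrow> reach a c \<Longrightarrow> reach a b \<or> reach b c"
  using pop prec_in_edges[of a b] prec_in_edges[of b c]
  unfolding POP_graph_def planar_order_def by blast

lemma Ov_subset_OG: "Ov \<subseteq> OG"
  using out_edges_subset_output_edges[OF progressive maximal] .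

lemma reach_from_in_edge_iff:
  assumes h: "h \<in> Iv"
  shows "reach h s \<longleftrightarrow> s \<in> Ov"
proof
  assume "reach h s"
  with h consider "s \<in> Ov" | e where "e \<in> Ov" "reach e s"
    by (rule edge_reach_from_in_edge)
  then show "s \<in> Ov"
  proof cases
    case (2 e)
    then have "e \<in> OG" using Ov_subset_OG by blast
    with 2(2) show ?thesis using output_edge_not_edge_reach[OF progressive] by blast
  qed
next
  assume s: "s \<in> Ov"
  then have "h \<noteq> s" using h Ov_subset_OG in_edge_not_output_edge[OF internal] by blast
  with s show "reach h s" using edge_reach_in_out[OF h] by blast
qed

lemma in_edge_prec_out_edge: "h \<in> Iv \<Longrightarrow> e \<in> Ov \<Longrightarrow> prec h e"
  using reach_from_in_edge_iff prec_if_reach by blast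

lemma Ov_nonempty: "Ov \<noteq> {}"
  using internal_vertex_edges_nonempty[OF progressive internal] by simp

lemma Ov_finite: "finite Ov"
  using progressive unfolding progressive_graph_def out_edges_def by simp

lemma Ov_linorder: "strict_linorder_on Ov prec"
  using linorder by (rule strict_linorder_on_subset) (auto simp: out_edges_def)

lemma first_out_in: "first_out \<in> Ov"
  using ord_min_in Ov_finite Ov_nonempty Ov_linorder .

lemma first_out_least: "e \<in> Ov \<Longrightarrow> e \<noteq> first_out \<Longrightarrow> prec first_out e"
  using ord_min_least Ov_finite Ov_nonempty Ov_linorder .

lemma last_out_in: "last_out \<in> Ov"
  using ord_max_in Ov_finite Ov_nonempty Ov_linorder .

lemma last_out_greatest: "e \<in> Ov \<Longrightarrow> e \<noteq> last_out \<Longrightarrow> prec e last_out"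
  using ord_max_greatest Ov_finite Ov_nonempty Ov_linorder .

lemma Ov_interval:
  "Ov = {s \<in> E. (first_out = s \<or> prec first_out s) \<and> (s = last_out \<or> prec s last_out)}"
proof (intro equalityI subsetI)
  fix s assume s: "s \<in> Ov"
  then have "s \<in> E" by (simp add: out_edges_def)
  with s show "s \<in> {s \<in> E. (first_out = s \<or> prec first_out s) \<and> (s = last_out \<or> prec s last_out)}"
    using first_out_least[OF s] last_out_greatest[OF s] by auto
next
  fix s assume s: "s \<in> {s \<in> E. (first_out = s \<or> prec first_out s) \<and> (s = last_out \<or> prec s last_out)}"
  show "s \<in> Ov"
  proof (rule ccontr)
    assume out: "s \<notin> Ov"
    then have first_s: "prec first_out s" and s_last: "prec s last_out"
      using s first_out_in last_out_in by auto
    obtain h where h: "h \<in> Iv"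
      using internal_vertex_edges_nonempty[OF progressive internal] by blast
    have "prec h s" using in_edge_prec_out_edge[OF h first_out_in] first_s by (rule prec_trans)
    moreover have "reach h last_out" using reach_from_in_edge_iff[OF h] last_out_in ..
    ultimately have "reach s last_out"
      using planar s_last reach_from_in_edge_iff[OF h] out by blast
    moreover have "s \<noteq> first_out" using out first_out_in by blast
    ultimately have "reach s first_out"
      by (rule edge_reach_redirect_out[OF _ last_out_in first_out_in])
    then show False using prec_if_reach prec_asym first_s by blast
  qed
qed

lemma output_edge_prec_in_edge_iff:
  assumes h: "h \<in> Iv" and oe: "oe \<in> OG - Ov"
  shows "prec oe h \<longleftrightarrow> prec oe first_out"
proof
  assume "prec oe h"
  then show "prec oe first_out" using in_edge_prec_out_edge[OF h first_out_in] by (rule prec_trans)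
next
  assume oe_first: "prec oe first_out"
  have "\<not> prec h oe"
  proof
    assume "prec h oe"
    then have "reach h oe \<or> reach oe first_out"
      using planar oe_first reach_from_in_edge_iff[OF h] first_out_in by blast
    then show False
      using oe reach_from_in_edge_iff[OF h] output_edge_not_edge_reach[OF progressive] by blast
  qed
  moreover have "h \<noteq> oe" using h oe in_edge_not_output_edge[OF internal] by blast
  moreover have "h \<in> E" "oe \<in> E" using h oe by (auto simp: in_edges_def output_edges_def)
  ultimately show "prec oe h" using prec_total by blast
qed

lemma in_edge_prec_output_edge_iff:
  assumes h: "h \<in> Iv" and oe: "oe \<in> OG - Ov"
  shows "prec h oe \<longleftrightarrow> prec last_out oe"
proof
  assume h_oe: "prec h oe"
  have "\<not> prec oe last_out"
  proof
    assume "prec oe last_out"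
    then have "reach h oe \<or> reach oe last_out"
      using planar h_oe reach_from_in_edge_iff[OF h] last_out_in by blast
    then show False
      using oe reach_from_in_edge_iff[OF h] output_edge_not_edge_reach[OF progressive] by blast
  qed
  moreover have "last_out \<noteq> oe" using oe last_out_in by blast
  moreover have "last_out \<in> E" "oe \<in> E"
    using last_out_in oe by (auto simp: out_edges_def output_edges_def)
  ultimately show "prec last_out oe" using prec_total by blast
next
  assume "prec last_out oe"
  then show "prec h oe" using prec_trans in_edge_prec_out_edge[OF h last_out_in] by blast
qed

end

theorem lemma3p4:
  fixes V :: "'v set" and E :: "'e set" and src tgt :: "'e \<Rightarrow> 'v"
    and prec :: "'e \<Rightarrow> 'e \<Rightarrow> bool" and v :: 'v
  assumes pop: "POP_graph V E src tgt prec"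
    and int: "internal_vertex V E src tgt v"
    and maximal: "\<not> (\<exists>v'. internal_vertex V E src tgt v' \<and> v' \<noteq> v \<and> vertex_reach E src tgt v v')"
  shows "out_edges E src v \<subseteq> output_edges V E src tgt
         \<and> is_interval prec E (out_edges E src v)
         \<and> is_interval prec (output_edges V E src tgt) (out_edges E src v)
         \<and> (\<forall>h\<in>in_edges E tgt v. \<forall>oe\<in>output_edges V E src tgt - out_edges E src v.
              (prec oe h \<longleftrightarrow> prec oe (ord_min prec (out_edges E src v))) \<and>
              (prec h oe \<longleftrightarrow> prec (ord_max prec (out_edges E src v)) oe))"
proof -
  interpret maximal_internal_vertex V E src tgt prec v
    using assms by unfold_locales
  have ends: "first_out \<in> OG" "last_out \<in> OG"
    using first_out_in last_out_in Ov_subset_OG by auto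
  have "OG \<subseteq> E" by (auto simp: output_edges_def)
  then have "is_interval prec E Ov" "is_interval prec OG Ov"
    unfolding is_interval_def using ends Ov_interval Ov_subset_OG by blast+
  moreover have "\<forall>h\<in>Iv. \<forall>oe\<in>OG - Ov.
      (prec oe h \<longleftrightarrow> prec oe first_out) \<and> (prec h oe \<longleftrightarrow> prec last_out oe)"
    using output_edge_prec_in_edge_iff in_edge_prec_output_edge_iff by blast
  ultimately show ?thesis using Ov_subset_OG by blast
qed

end
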